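(* Let $N$ be a bidirected Manhattan network on $T$ such that the boundary of every strip is contained in $N$ and is directed in $N$ as a directed cycle (clockwise or counterclockwise). Then any two strips belonging to the same block are compatible.
   Context: $T$ is a finite set of points (terminals) in the plane, no two on a common horizontal or vertical line. For points $p,q$, $R(p,q)$ is the smallest closed axis-parallel rectangle containing $p$ and $q$; for ${\bf t}_i,{\bf t}_j\in T$, $R_{i,j}=R({\bf t}_i,{\bf t}_j)$, and $R_{i,j}$ is empty if $R_{i,j}\cap T=\{{\bf t}_i,{\bf t}_j\}$. $\Gamma(T)$ is the grid formed by the horizontal and vertical lines through the terminals, restricted to the bounding box of $T$ (vertices: intersection points of these lines; edges: segments between consecutive vertices on a line). An oriented subnetwork of $\Gamma(T)$ is a set of edges of $\Gamma(T)$ each directed in exactly one sense; a directed Manhattan path from $p$ to $q$ is a directed path in it of length $|p^x-q^x|+|p^y-q^y|$. A bidirected Manhattan network on $T$ is an oriented subnetwork of $\Gamma(T)$ containing a directed Manhattan path from $t$ to $t'$ for every ordered pair of distinct terminals $t,t'\in T$. An empty rectangle $R_{i,j}$ is a vertical strip if ${\bf t}_i^x,{\bf t}_j^x$ are consecutive in the sorted list of $x$-coordinates of $T$, and a horizontal strip if ${\bf t}_i^y,{\bf t}_j^y$ are consecutive in the sorted list of $y$-coordinates of $T$; a strip is a vertical or horizontal strip. $R_{i,j}$ has positive slope if $({\bf t}_i^x-{\bf t}_j^x)({\bf t}_i^y-{\bf t}_j^y)>0$, negative slope otherwise. Two strips (whose boundaries are directed cycles) are compatible if they have the same slope and the same orientation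 (both clockwise or both counterclockwise), or different slopes and opposite orientations. Quadrants: $Q_1(p)=\{q:q^x\ge p^x,q^y\ge p^y\}$, $Q_2(p)=\{q:q^x\le p^x,q^y\ge p^y\}$, $Q_3(p)=\{q:q^x\le p^x,q^y\le p^y\}$, $Q_4(p)=\{q:q^x\ge p^x,q^y\le p^y\}$. Blocks: let $P_{24}=\{t\in T: Q_2(t)\cap T=Q_4(t)\cap T=\{t\}\}$ and $P_{13}=\{t\in T:Q_1(t)\cap T=Q_3(t)\cap T=\{t\}\}$. If $P_{24}\ne\emptyset$, sort it by $x$-coordinate as $p_1,\dots,p_m$; the blocks are $T\cap Q_3(p_1)$, $T\cap R(p_a,p_{a+1})$ for $1\le a<m$, and $T\cap Q_1(p_m)$. If $P_{24}=\emptyset\ne P_{13}$, sort $P_{13}$ by $x$-coordinate as $p_1,\dots,p_m$; the blocks are $T\cap Q_2(p_1)$, $T\cap R(p_a,p_{a+1})$ for $1\le a<m$, and $T\cap Q_4(p_m)$. If both are empty, $T$ itself is the only block. A strip $R_{i,j}$ belongs to a block $B$ if ${\bf t}_i,{\bf t}_j\in B$. *)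

theory Defs
  imports Complex_Main
begin

type_synonym pt = "real \<times> real"

definition general_position :: "pt set \<Rightarrow> bool" where
  "general_position T \<longleftrightarrow> finite T \<and>
     (\<forall>p\<in>T. \<forall>q\<in>T. p \<noteq> q \<longrightarrow> fst p \<noteq> fst q \<and> snd p \<noteq> snd q)"

definition rect :: "pt \<Rightarrow> pt \<Rightarrow> pt set" where
  "rect p q = {r. min (fst p) (fst q) \<le> fst r \<and> fst r \<le> max (fst p) (fst q) \<and>
                  min (snd p) (snd q) \<le> snd r \<and> snd r \<le> max (snd p) (snd q)}"

definition Q1 :: "pt \<Rightarrow> pt set" where "Q1 p = {q. fst q \<ge> fst p \<and> snd q \<ge> snd p}"
definition Q2 :: "pt \<Rightarrow> pt set" where "Q2 p = {q. fst q \<le> fst p \<and> snd q \<ge> snd p}"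
definition Q3 :: "pt \<Rightarrow> pt set" where "Q3 p = {q. fst q \<le> fst p \<and> snd q \<le> snd p}"
definition Q4 :: "pt \<Rightarrow> pt set" where "Q4 p = {q. fst q \<ge> fst p \<and> snd q \<le> snd p}"

text \<open>Edges of the grid Gamma(T): segments between consecutive grid vertices on a
  horizontal or vertical line through a terminal (as unordered pairs, given in both orders).\<close>
definition grid_edge :: "pt set \<Rightarrow> pt \<Rightarrow> pt \<Rightarrow> bool" where
  "grid_edge T u v \<longleftrightarrow>
     (snd u = snd v \<and> snd u \<in> snd ` T \<and> fst u \<in> fst ` T \<and> fst v \<in> fst ` T \<and> fst u \<noteq> fst v \<and>
        \<not> (\<exists>x\<in>fst ` T. min (fst u) (fst v) < x \<and> x < max (fst u) (fst v))) \<or>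
     (fst u = fst v \<and> fst u \<in> fst ` T \<and> snd u \<in> snd ` T \<and> snd v \<in> snd ` T \<and> snd u \<noteq> snd v \<and>
        \<not> (\<exists>y\<in>snd ` T. min (snd u) (snd v) < y \<and> y < max (snd u) (snd v)))"

definition oriented_subnetwork :: "pt set \<Rightarrow> (pt \<times> pt) set \<Rightarrow> bool" where
  "oriented_subnetwork T N \<longleftrightarrow>
     (\<forall>(u,v)\<in>N. grid_edge T u v) \<and> (\<forall>(u,v)\<in>N. (v,u) \<notin> N)"

definition l1 :: "pt \<Rightarrow> pt \<Rightarrow> real" where
  "l1 p q = \<bar>fst p - fst q\<bar> + \<bar>snd p - snd q\<bar>"

definition manhattan_path :: "(pt \<times> pt) set \<Rightarrow> pt \<Rightarrow> pt \<Rightarrow> bool" where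
  "manhattan_path N p q \<longleftrightarrow>
     (\<exists>vs. vs \<noteq> [] \<and> hd vs = p \<and> last vs = q \<and>
        (\<forall>e\<in>set (zip vs (tl vs)). e \<in> N) \<and>
        sum_list (map (\<lambda>(u,v). l1 u v) (zip vs (tl vs))) = l1 p q)"

definition bidirected_manhattan :: "pt set \<Rightarrow> (pt \<times> pt) set \<Rightarrow> bool" where
  "bidirected_manhattan T N \<longleftrightarrow> oriented_subnetwork T N \<and>
     (\<forall>t\<in>T. \<forall>t'\<in>T. t \<noteq> t' \<longrightarrow> manhattan_path N t t')"

definition empty_rect :: "pt set \<Rightarrow> pt \<Rightarrow> pt \<Rightarrow> bool" where
  "empty_rect T p q \<longleftrightarrow> rect p q \<inter> T = {p, q}"

definition vstrip :: "pt set \<Rightarrow> pt \<Rightarrow> pt \<Rightarrow> bool" where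
  "vstrip T p q \<longleftrightarrow> p \<in> T \<and> q \<in> T \<and> p \<noteq> q \<and> empty_rect T p q \<and>
     \<not> (\<exists>t\<in>T. min (fst p) (fst q) < fst t \<and> fst t < max (fst p) (fst q))"

definition hstrip :: "pt set \<Rightarrow> pt \<Rightarrow> pt \<Rightarrow> bool" where
  "hstrip T p q \<longleftrightarrow> p \<in> T \<and> q \<in> T \<and> p \<noteq> q \<and> empty_rect T p q \<and>
     \<not> (\<exists>t\<in>T. min (snd p) (snd q) < snd t \<and> snd t < max (snd p) (snd q))"

definition is_strip :: "pt set \<Rightarrow> pt \<Rightarrow> pt \<Rightarrow> bool" where
  "is_strip T p q \<longleftrightarrow> vstrip T p q \<or> hstrip T p q"

definition pos_slope :: "pt \<Rightarrow> pt \<Rightarrow> bool" where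
  "pos_slope p q \<longleftrightarrow> (fst p - fst q) * (snd p - snd q) > 0"

text \<open>The boundary of R(p,q) as directed grid edges, oriented clockwise
  (y axis pointing up: top side left-to-right, right side downwards,
   bottom side right-to-left, left side upwards).\<close>
definition cw_boundary :: "pt set \<Rightarrow> pt \<Rightarrow> pt \<Rightarrow> (pt \<times> pt) set" where
  "cw_boundary T p q =
    (let a = min (fst p) (fst q); b = max (fst p) (fst q);
         c = min (snd p) (snd q); d = max (snd p) (snd q) in
     {(u,v). grid_edge T u v \<and>
       ((snd u = d \<and> snd v = d \<and> a \<le> fst u \<and> fst u < fst v \<and> fst v \<le> b) \<or>
        (fst u = b \<and> fst v = b \<and> c \<le> snd v \<and> snd v < snd u \<and> snd u \<le> d) \<or>
        (snd u = c \<and> snd v = c \<and> a \<le> fst v \<and> fst v < fst u \<and> fst u \<le> b) \<or>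
        (fst u = a \<and> fst v = a \<and> c \<le> snd u \<and> snd u < snd v \<and> snd v \<le> d))})"

definition ccw_boundary :: "pt set \<Rightarrow> pt \<Rightarrow> pt \<Rightarrow> (pt \<times> pt) set" where
  "ccw_boundary T p q = converse (cw_boundary T p q)"

definition cw_in :: "pt set \<Rightarrow> (pt \<times> pt) set \<Rightarrow> pt \<Rightarrow> pt \<Rightarrow> bool" where
  "cw_in T N p q \<longleftrightarrow> cw_boundary T p q \<subseteq> N"

definition ccw_in :: "pt set \<Rightarrow> (pt \<times> pt) set \<Rightarrow> pt \<Rightarrow> pt \<Rightarrow> bool" where
  "ccw_in T N p q \<longleftrightarrow> ccw_boundary T p q \<subseteq> N"

definition boundary_directed :: "pt set \<Rightarrow> (pt \<times> pt) set \<Rightarrow> pt \<Rightarrow> pt \<Rightarrow> bool" where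
  "boundary_directed T N p q \<longleftrightarrow> cw_in T N p q \<or> ccw_in T N p q"

definition compatible :: "pt set \<Rightarrow> (pt \<times> pt) set \<Rightarrow> pt \<Rightarrow> pt \<Rightarrow> pt \<Rightarrow> pt \<Rightarrow> bool" where
  "compatible T N p1 q1 p2 q2 \<longleftrightarrow>
     (pos_slope p1 q1 = pos_slope p2 q2 \<and>
        ((cw_in T N p1 q1 \<and> cw_in T N p2 q2) \<or> (ccw_in T N p1 q1 \<and> ccw_in T N p2 q2))) \<or>
     (pos_slope p1 q1 \<noteq> pos_slope p2 q2 \<and>
        ((cw_in T N p1 q1 \<and> ccw_in T N p2 q2) \<or> (ccw_in T N p1 q1 \<and> cw_in T N p2 q2)))"

definition P24 :: "pt set \<Rightarrow> pt set" where
  "P24 T = {t\<in>T. Q2 t \<inter> T = {t} \<and> Q4 t \<inter> T = {t}}"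

definition P13 :: "pt set \<Rightarrow> pt set" where
  "P13 T = {t\<in>T. Q1 t \<inter> T = {t} \<and> Q3 t \<inter> T = {t}}"

definition consec :: "pt set \<Rightarrow> pt \<Rightarrow> pt \<Rightarrow> bool" where
  "consec P p q \<longleftrightarrow> p \<in> P \<and> q \<in> P \<and> fst p < fst q \<and>
     \<not> (\<exists>r\<in>P. fst p < fst r \<and> fst r < fst q)"

definition blocks :: "pt set \<Rightarrow> pt set set" where
  "blocks T =
    (if P24 T \<noteq> {} then
       {T \<inter> Q3 p | p. p \<in> P24 T \<and> (\<forall>r\<in>P24 T. fst p \<le> fst r)} \<union>
       {T \<inter> rect p q | p q. consec (P24 T) p q} \<union>
       {T \<inter> Q1 p | p. p \<in> P24 T \<and> (\<forall>r\<in>P24 T. fst r \<le> fst p)}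
     else if P13 T \<noteq> {} then
       {T \<inter> Q2 p | p. p \<in> P13 T \<and> (\<forall>r\<in>P13 T. fst p \<le> fst r)} \<union>
       {T \<inter> rect p q | p q. consec (P13 T) p q} \<union>
       {T \<inter> Q4 p | p. p \<in> P13 T \<and> (\<forall>r\<in>P13 T. fst r \<le> fst p)}
     else {T})"

end

theory Submission
  imports Defs
begin

(* Write cw_matches_slope p q for "the boundary of R(p,q) is clockwise iff R(p,q) has positive
   slope"; two strips with directed boundaries are compatible iff they agree on it.

   Local part: at a corner t of a directed rectangle R(t,a), the direction in N of the first
   vertical (horizontal) grid edge leaving t towards a determines the invariant.  So rectangles
   at t whose far corners lie on a common side of t agree.  If t is in neither P24 nor P13,
   rectangles in opposite quadrants of t also agree: a Manhattan path from t to a suitable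
   terminal u, and one from u to t, leave and enter t through steps towards u, and these edges
   link the two orientations.

   Global part: every block is y-convex and its y-interior terminals are not in P24 or P13.
   Walking upwards through consecutive horizontal strips of the block, the local part shows
   that they all agree, and every strip of the block agrees with the horizontal strip at its
   lower corner. *)

definition next_greater :: "real set \<Rightarrow> real \<Rightarrow> real" where
  "next_greater A x = Min {y\<in>A. x < y}"

definition next_smaller :: "real set \<Rightarrow> real \<Rightarrow> real" where
  "next_smaller A x = Max {y\<in>A. y < x}"

lemma next_greater:
  assumes "finite A" "y \<in> A" "x < y"
  shows "next_greater A x \<in> A" "x < next_greater A x"
    "\<not> (\<exists>z\<in>A. x < z \<and> z < next_greater A x)"
proof -
  have fin: "finite {y\<in>A. x < y}" and ne: "{y\<in>A. x < y} \<noteq> {}" using assms by auto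
  have "next_greater A x \<in> {y\<in>A. x < y}"
    unfolding next_greater_def using Min_in[OF fin ne] .
  then show "next_greater A x \<in> A" "x < next_greater A x" by simp_all
  show "\<not> (\<exists>z\<in>A. x < z \<and> z < next_greater A x)"
  proof
    assume "\<exists>z\<in>A. x < z \<and> z < next_greater A x"
    then obtain z where "z \<in> A" "x < z" "z < next_greater A x" by blast
    then show False using Min_le[OF fin, of z] unfolding next_greater_def by simp
  qed
qed

lemma next_smaller:
  assumes "finite A" "y \<in> A" "y < x"
  shows "next_smaller A x \<in> A" "next_smaller A x < x"
    "\<not> (\<exists>z\<in>A. next_smaller A x < z \<and> z < x)"
proof -
  have fin: "finite {y\<in>A. y < x}" and ne: "{y\<in>A. y < x} \<noteq> {}" using assms by auto
  have "next_smaller A x \<in> {y\<in>A. y < x}"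
    unfolding next_smaller_def using Max_in[OF fin ne] .
  then show "next_smaller A x \<in> A" "next_smaller A x < x" by simp_all
  show "\<not> (\<exists>z\<in>A. next_smaller A x < z \<and> z < x)"
  proof
    assume "\<exists>z\<in>A. next_smaller A x < z \<and> z < x"
    then obtain z where "z \<in> A" "z < x" "next_smaller A x < z" by blast
    then show False using Max_ge[OF fin, of z] unfolding next_smaller_def by simp
  qed
qed

lemma next_greater_eqI:
  assumes "finite A" "y \<in> A" "x < y" "\<not> (\<exists>z\<in>A. x < z \<and> z < y)"
  shows "next_greater A x = y"
  using next_greater[OF assms(1-3)] assms(2-4) by (meson linorder_neqE)

lemma next_smaller_eqI:
  assumes "finite A" "y \<in> A" "y < x" "\<not> (\<exists>z\<in>A. y < z \<and> z < x)"
  shows "next_smaller A x = y"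
  using next_smaller[OF assms(1-3)] assms(2-4) by (meson linorder_neqE)

(* The grid vertex reached from t by one vertical, resp. horizontal, grid step in the
   direction of u.  These are the only possible first steps of a Manhattan path from t to u. *)
definition vstep :: "pt set \<Rightarrow> pt \<Rightarrow> pt \<Rightarrow> pt" where
  "vstep T t u = (fst t, if snd t < snd u then next_greater (snd ` T) (snd t)
                                            else next_smaller (snd ` T) (snd t))"

definition hstep :: "pt set \<Rightarrow> pt \<Rightarrow> pt \<Rightarrow> pt" where
  "hstep T t u = (if fst t < fst u then next_greater (fst ` T) (fst t)
                                    else next_smaller (fst ` T) (fst t), snd t)"

lemma grid_edge_sym: "grid_edge T u v \<longleftrightarrow> grid_edge T v u"
proof -
  have "grid_edge T v u" if "grid_edge T u v" for u v
    using that unfolding grid_edge_def by (elim disjE conjE) (simp_all add: min.commute max.commute)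
  then show ?thesis by blast
qed

lemma grid_edge_vertical:
  assumes "fst u = fst v" "fst u \<in> fst ` T" "snd u \<in> snd ` T" "snd v \<in> snd ` T" "snd u < snd v"
    "\<not> (\<exists>y\<in>snd ` T. snd u < y \<and> y < snd v)"
  shows "grid_edge T u v" "grid_edge T v u"
  using assms unfolding grid_edge_def by (simp_all add: min_absorb1 max_absorb2 min_absorb2 max_absorb1)

lemma grid_edge_horizontal:
  assumes "snd u = snd v" "snd u \<in> snd ` T" "fst u \<in> fst ` T" "fst v \<in> fst ` T" "fst u < fst v"
    "\<not> (\<exists>x\<in>fst ` T. fst u < x \<and> x < fst v)"
  shows "grid_edge T u v" "grid_edge T v u"
  using assms unfolding grid_edge_def by (simp_all add: min_absorb1 max_absorb2 min_absorb2 max_absorb1)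

lemma vstep:
  assumes "finite T" "t \<in> T" "u \<in> T" "snd t \<noteq> snd u"
  defines "v \<equiv> vstep T t u"
  shows "grid_edge T t v" "fst v = fst t"
    "snd t < snd u \<Longrightarrow> snd t < snd v \<and> snd v \<le> snd u"
    "snd u < snd t \<Longrightarrow> snd u \<le> snd v \<and> snd v < snd t"
proof -
  have fin: "finite (snd ` T)" and mem: "snd u \<in> snd ` T" "snd t \<in> snd ` T" "fst t \<in> fst ` T"
    using assms by auto
  show "fst v = fst t" unfolding v_def vstep_def by simp
  show "snd t < snd u \<Longrightarrow> snd t < snd v \<and> snd v \<le> snd u"
    using next_greater[OF fin mem(1), of "snd t"] mem(1) unfolding v_def vstep_def
    by (auto simp: not_less)
  show "snd u < snd t \<Longrightarrow> snd u \<le> snd v \<and> snd v < snd t"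
    using next_smaller[OF fin mem(1), of "snd t"] mem(1) unfolding v_def vstep_def
    by (auto simp: not_less)
  show "grid_edge T t v"
  proof (cases "snd t < snd u")
    case True
    note ng = next_greater[OF fin mem(1) True]
    show ?thesis unfolding v_def vstep_def using True ng mem
      by (intro grid_edge_vertical(1)) simp_all
  next
    case False
    then have lt: "snd u < snd t" using assms(4) by simp
    note ns = next_smaller[OF fin mem(1) lt]
    show ?thesis unfolding v_def vstep_def using False ns mem
      by (intro grid_edge_vertical(2)) simp_all
  qed
qed

lemma hstep:
  assumes "finite T" "t \<in> T" "u \<in> T" "fst t \<noteq> fst u"
  defines "h \<equiv> hstep T t u"
  shows "grid_edge T t h" "snd h = snd t"
    "fst t < fst u \<Longrightarrow> fst t < fst h \<and> fst h \<le> fst u"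
    "fst u < fst t \<Longrightarrow> fst u \<le> fst h \<and> fst h < fst t"
proof -
  have fin: "finite (fst ` T)" and mem: "fst u \<in> fst ` T" "fst t \<in> fst ` T" "snd t \<in> snd ` T"
    using assms by auto
  show "snd h = snd t" unfolding h_def hstep_def by simp
  show "fst t < fst u \<Longrightarrow> fst t < fst h \<and> fst h \<le> fst u"
    using next_greater[OF fin mem(1), of "fst t"] mem(1) unfolding h_def hstep_def
    by (auto simp: not_less)
  show "fst u < fst t \<Longrightarrow> fst u \<le> fst h \<and> fst h < fst t"
    using next_smaller[OF fin mem(1), of "fst t"] mem(1) unfolding h_def hstep_def
    by (auto simp: not_less)
  show "grid_edge T t h"
  proof (cases "fst t < fst u")
    case True
    note ng = next_greater[OF fin mem(1) True]
    show ?thesis unfolding h_def hstep_def using True ng mem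
      by (intro grid_edge_horizontal(1)) simp_all
  next
    case False
    then have lt: "fst u < fst t" using assms(4) by simp
    note ns = next_smaller[OF fin mem(1) lt]
    show ?thesis unfolding h_def hstep_def using False ns mem
      by (intro grid_edge_horizontal(2)) simp_all
  qed
qed

definition cw_matches_slope :: "pt set \<Rightarrow> (pt \<times> pt) set \<Rightarrow> pt \<Rightarrow> pt \<Rightarrow> bool" where
  "cw_matches_slope T N p q \<longleftrightarrow> (cw_in T N p q \<longleftrightarrow> pos_slope p q)"

lemma pos_slope_iff:
  "pos_slope p q \<longleftrightarrow> (fst p < fst q \<and> snd p < snd q) \<or> (fst q < fst p \<and> snd q < snd p)"
  unfolding pos_slope_def zero_less_mult_iff by auto

lemma vstep_on_boundary:
  assumes "finite T" "t \<in> T" "a \<in> T" "fst t \<noteq> fst a" "snd t \<noteq> snd a"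
  shows "(if pos_slope t a then (t, vstep T t a) else (vstep T t a, t)) \<in> cw_boundary T t a"
proof -
  define v where "v = vstep T t a"
  note props = vstep[OF assms(1-3,5), folded v_def]
  have edges: "grid_edge T t v" "grid_edge T v t" using props(1) grid_edge_sym by blast+
  consider "fst t < fst a" "snd t < snd a" | "fst a < fst t" "snd t < snd a"
    | "fst t < fst a" "snd a < snd t" | "fst a < fst t" "snd a < snd t"
    using assms(4,5) by linarith
  then show ?thesis
    by cases (use props edges in \<open>simp_all add: v_def[symmetric] pos_slope_iff cw_boundary_def Let_def
                min_def max_def\<close>)
qed

lemma hstep_on_boundary:
  assumes "finite T" "t \<in> T" "a \<in> T" "fst t \<noteq> fst a" "snd t \<noteq> snd a"
  shows "(if pos_slope t a then (hstep T t a, t) else (t, hstep T t a)) \<in> cw_boundary T t a"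
proof -
  define h where "h = hstep T t a"
  note props = hstep[OF assms(1-4), folded h_def]
  have edges: "grid_edge T t h" "grid_edge T h t" using props(1) grid_edge_sym by blast+
  consider "fst t < fst a" "snd t < snd a" | "fst a < fst t" "snd t < snd a"
    | "fst t < fst a" "snd a < snd t" | "fst a < fst t" "snd a < snd t"
    using assms(4,5) by linarith
  then show ?thesis
    by cases (use props edges in \<open>simp_all add: h_def[symmetric] pos_slope_iff cw_boundary_def Let_def
                min_def max_def\<close>)
qed

lemma cw_boundary_edge_in_N:
  assumes "oriented_subnetwork T N" "boundary_directed T N t a" "(x, y) \<in> cw_boundary T t a"
  shows "(x, y) \<in> N \<longleftrightarrow> cw_in T N t a" "(y, x) \<in> N \<longleftrightarrow> \<not> cw_in T N t a"
  using assms unfolding oriented_subnetwork_def boundary_directed_def cw_in_def ccw_in_def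
    ccw_boundary_def by blast+

lemma vstep_in_N:
  assumes "oriented_subnetwork T N" "boundary_directed T N t a"
    "finite T" "t \<in> T" "a \<in> T" "fst t \<noteq> fst a" "snd t \<noteq> snd a"
  shows "(t, vstep T t a) \<in> N \<longleftrightarrow> cw_matches_slope T N t a"
    "(vstep T t a, t) \<in> N \<longleftrightarrow> \<not> cw_matches_slope T N t a"
  using vstep_on_boundary[OF assms(3-7)] cw_boundary_edge_in_N[OF assms(1,2)]
  unfolding cw_matches_slope_def by (auto split: if_splits)

lemma hstep_in_N:
  assumes "oriented_subnetwork T N" "boundary_directed T N t a"
    "finite T" "t \<in> T" "a \<in> T" "fst t \<noteq> fst a" "snd t \<noteq> snd a"
  shows "(t, hstep T t a) \<in> N \<longleftrightarrow> \<not> cw_matches_slope T N t a"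
    "(hstep T t a, t) \<in> N \<longleftrightarrow> cw_matches_slope T N t a"
  using hstep_on_boundary[OF assms(3-7)] cw_boundary_edge_in_N[OF assms(1,2)]
  unfolding cw_matches_slope_def by (auto split: if_splits)

lemma boundary_not_both_orientations:
  assumes "oriented_subnetwork T N" "finite T" "t \<in> T" "a \<in> T" "fst t \<noteq> fst a" "snd t \<noteq> snd a"
  shows "\<not> (cw_in T N t a \<and> ccw_in T N t a)"
proof -
  obtain x y where "(x, y) \<in> cw_boundary T t a"
    using vstep_on_boundary[OF assms(2-6)] by (auto split: if_splits)
  then show ?thesis
    using assms(1) unfolding oriented_subnetwork_def cw_in_def ccw_in_def ccw_boundary_def by blast
qed

definition path_length :: "pt list \<Rightarrow> real" where
  "path_length vs = sum_list (map (\<lambda>(u, v). l1 u v) (zip vs (tl vs)))"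

lemma l1_triangle: "l1 a b \<le> l1 a c + l1 c b"
  unfolding l1_def by linarith

lemma path_length_Cons2: "path_length (x # y # ys) = l1 x y + path_length (y # ys)"
  unfolding path_length_def by simp

lemma path_length_ge_l1: "vs \<noteq> [] \<Longrightarrow> l1 (hd vs) (last vs) \<le> path_length vs"
proof (induction vs rule: induct_list012)
  case (3 x y ys)
  have "l1 y (last (x # y # ys)) \<le> path_length (y # ys)" using "3.IH"(2) by simp
  then show ?case unfolding path_length_Cons2 list.sel(1)
    using l1_triangle[of x "last (x # y # ys)" y] by linarith
qed (simp_all add: path_length_def l1_def)

lemma geodesic_first_step:
  assumes "vs \<noteq> []" "hd vs = p" "last vs = q" "p \<noteq> q" "\<forall>e\<in>set (zip vs (tl vs)). e \<in> N"
    "path_length vs = l1 p q"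
  shows "\<exists>w. (p, w) \<in> N \<and> l1 p w + l1 w q = l1 p q"
proof -
  obtain w rest where vs: "vs = p # w # rest"
    using assms(1-4) by (cases vs rule: remdups_adj.cases) auto
  have "l1 w q \<le> path_length (w # rest)" using path_length_ge_l1[of "w # rest"] vs assms(3) by simp
  then have "l1 p w + l1 w q \<le> l1 p q" using assms(6) vs by (simp add: path_length_Cons2)
  then show ?thesis using assms(5) vs l1_triangle[of p q w] by (intro exI[of _ w]) simp
qed

lemma geodesic_last_step:
  "\<lbrakk>vs \<noteq> []; last vs = q; hd vs \<noteq> q; \<forall>e\<in>set (zip vs (tl vs)). e \<in> N;
    path_length vs = l1 (hd vs) q\<rbrakk>
   \<Longrightarrow> \<exists>w. (w, q) \<in> N \<and> l1 (hd vs) w + l1 w q = l1 (hd vs) q"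
proof (induction vs)
  case (Cons p vs)
  then obtain w rest where vs: "vs = w # rest" by (cases vs) auto
  have len: "path_length (p # vs) = l1 p w + path_length vs" using vs path_length_Cons2 by simp
  have lower: "l1 w q \<le> path_length vs" using path_length_ge_l1[of vs] vs Cons.prems(2) by simp
  show ?case
  proof (cases "w = q")
    case True
    then show ?thesis using Cons.prems(4) vs by (intro exI[of _ p]) (simp add: l1_def)
  next
    case False
    have "path_length vs = l1 w q" using len lower Cons.prems(5) l1_triangle[of p q w] by simp
    then obtain w' where w': "(w', q) \<in> N" "l1 w w' + l1 w' q = l1 w q"
      using Cons.IH Cons.prems(2,4) False vs by auto
    have "l1 p w' + l1 w' q = l1 p q"
      using l1_triangle[of p w' w] l1_triangle[of p q w'] w'(2) len lower Cons.prems(5) by simp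
    then show ?thesis using w' by (intro exI[of _ w']) simp
  qed
qed simp

lemma l1_geodesic_between:
  assumes "l1 p w + l1 w q = l1 p q"
  shows "snd p < snd w \<Longrightarrow> snd p < snd q" "snd w < snd p \<Longrightarrow> snd q < snd p"
    "fst p < fst w \<Longrightarrow> fst p < fst q" "fst w < fst p \<Longrightarrow> fst q < fst p"
  using assms unfolding l1_def by (auto simp: abs_if split: if_splits)

lemma vertical_geodesic_step:
  assumes "finite T" "fst w = fst p" "snd w \<in> snd ` T"
    "\<not> (\<exists>y\<in>snd ` T. min (snd p) (snd w) < y \<and> y < max (snd p) (snd w))"
    "snd p \<noteq> snd w" "l1 p w + l1 w q = l1 p q"
  shows "w = vstep T p q"
proof (cases "snd p < snd w")
  case True
  have "next_greater (snd ` T) (snd p) = snd w"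
    using assms(1,3,4) True by (intro next_greater_eqI) (simp_all add: min_def max_def)
  then show ?thesis using l1_geodesic_between(1)[OF assms(6) True] assms(2)
    unfolding vstep_def by (simp add: prod_eq_iff)
next
  case False
  then have below: "snd w < snd p" using assms(5) by simp
  have "next_smaller (snd ` T) (snd p) = snd w"
    using assms(1,3,4) below by (intro next_smaller_eqI) (simp_all add: min_def max_def)
  then show ?thesis using l1_geodesic_between(2)[OF assms(6) below] assms(2)
    unfolding vstep_def by (simp add: prod_eq_iff)
qed

lemma horizontal_geodesic_step:
  assumes "finite T" "snd w = snd p" "fst w \<in> fst ` T"
    "\<not> (\<exists>x\<in>fst ` T. min (fst p) (fst w) < x \<and> x < max (fst p) (fst w))"
    "fst p \<noteq> fst w" "l1 p w + l1 w q = l1 p q"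
  shows "w = hstep T p q"
proof (cases "fst p < fst w")
  case True
  have "next_greater (fst ` T) (fst p) = fst w"
    using assms(1,3,4) True by (intro next_greater_eqI) (simp_all add: min_def max_def)
  then show ?thesis using l1_geodesic_between(3)[OF assms(6) True] assms(2)
    unfolding hstep_def by (simp add: prod_eq_iff)
next
  case False
  then have left: "fst w < fst p" using assms(5) by simp
  have "next_smaller (fst ` T) (fst p) = fst w"
    using assms(1,3,4) left by (intro next_smaller_eqI) (simp_all add: min_def max_def)
  then show ?thesis using l1_geodesic_between(4)[OF assms(6) left] assms(2)
    unfolding hstep_def by (simp add: prod_eq_iff)
qed

lemma geodesic_grid_step:
  assumes "finite T" "grid_edge T p w" "l1 p w + l1 w q = l1 p q"
  shows "w = vstep T p q \<or> w = hstep T p q"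
  using assms(2) unfolding grid_edge_def
proof (elim disjE conjE)
  assume "snd p = snd w" "fst w \<in> fst ` T" "fst p \<noteq> fst w"
    "\<not> (\<exists>x\<in>fst ` T. min (fst p) (fst w) < x \<and> x < max (fst p) (fst w))"
  then show ?thesis using horizontal_geodesic_step[OF assms(1) _ _ _ _ assms(3)] by simp
next
  assume "fst p = fst w" "snd w \<in> snd ` T" "snd p \<noteq> snd w"
    "\<not> (\<exists>y\<in>snd ` T. min (snd p) (snd w) < y \<and> y < max (snd p) (snd w))"
  then show ?thesis using vertical_geodesic_step[OF assms(1) _ _ _ _ assms(3)] by simp
qed

lemma manhattan_exit_step:
  assumes "bidirected_manhattan T N" "finite T" "t \<in> T" "u \<in> T" "t \<noteq> u"
  shows "\<exists>w. (t, w) \<in> N \<and> (w = vstep T t u \<or> w = hstep T t u)"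
proof -
  have "manhattan_path N t u" using assms(1,3-5) unfolding bidirected_manhattan_def by blast
  then obtain vs where vs: "vs \<noteq> []" "hd vs = t" "last vs = u"
      "\<forall>e\<in>set (zip vs (tl vs)). e \<in> N" "path_length vs = l1 t u"
    unfolding manhattan_path_def path_length_def by blast
  obtain w where w: "(t, w) \<in> N" "l1 t w + l1 w u = l1 t u"
    using geodesic_first_step[OF vs(1-3) assms(5) vs(4,5)] by blast
  have "grid_edge T t w"
    using w(1) assms(1) unfolding bidirected_manhattan_def oriented_subnetwork_def by blast
  then show ?thesis using geodesic_grid_step[OF assms(2) _ w(2)] w(1) by blast
qed

lemma manhattan_entry_step:
  assumes "bidirected_manhattan T N" "finite T" "t \<in> T" "u \<in> T" "t \<noteq> u"
  shows "\<exists>w. (w, t) \<in> N \<and> (w = vstep T t u \<or> w = hstep T t u)"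
proof -
  have "manhattan_path N u t" using assms(1,3-5) unfolding bidirected_manhattan_def by metis
  then obtain vs where vs: "vs \<noteq> []" "hd vs = u" "last vs = t"
      "\<forall>e\<in>set (zip vs (tl vs)). e \<in> N" "path_length vs = l1 u t"
    unfolding manhattan_path_def path_length_def by blast
  obtain w where w: "(w, t) \<in> N" "l1 u w + l1 w t = l1 u t"
    using geodesic_last_step[OF vs(1,3) _ vs(4)] vs(2,5) assms(5) by auto
  have "grid_edge T w t"
    using w(1) assms(1) unfolding bidirected_manhattan_def oriented_subnetwork_def by blast
  then have "grid_edge T t w" using grid_edge_sym by blast
  moreover have "l1 t w + l1 w u = l1 t u" using w(2) by (simp add: l1_def abs_minus_commute)
  ultimately show ?thesis using geodesic_grid_step[OF assms(2)] w(1) by blast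
qed

lemma vstep_eqI: "(snd t < snd u \<longleftrightarrow> snd t < snd a) \<Longrightarrow> vstep T t u = vstep T t a"
  unfolding vstep_def by simp

lemma hstep_eqI: "(fst t < fst u \<longleftrightarrow> fst t < fst a) \<Longrightarrow> hstep T t u = hstep T t a"
  unfolding hstep_def by simp

lemma general_positionD:
  "general_position T \<Longrightarrow> a \<in> T \<Longrightarrow> b \<in> T \<Longrightarrow> a \<noteq> b \<Longrightarrow> fst a \<noteq> fst b \<and> snd a \<noteq> snd b"
  unfolding general_position_def by blast

(* Two directed rectangles at a common corner t whose far corners lie on the same vertical
   (horizontal) side of t share their first vertical (horizontal) edge, hence the invariant. *)
lemma cw_matches_slope_same_vertical_side:
  assumes or: "oriented_subnetwork T N" and bd: "boundary_directed T N t a" "boundary_directed T N t b"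
    and T: "finite T" "t \<in> T" "a \<in> T" "b \<in> T"
    and coords: "fst t \<noteq> fst a" "snd t \<noteq> snd a" "fst t \<noteq> fst b" "snd t \<noteq> snd b"
    and side: "snd t < snd a \<longleftrightarrow> snd t < snd b"
  shows "cw_matches_slope T N t a = cw_matches_slope T N t b"
  using vstep_in_N(1)[OF or bd(1) T(1-3) coords(1,2)] vstep_in_N(1)[OF or bd(2) T(1,2,4) coords(3,4)]
    vstep_eqI[OF side] by simp

lemma cw_matches_slope_same_horizontal_side:
  assumes or: "oriented_subnetwork T N" and bd: "boundary_directed T N t a" "boundary_directed T N t b"
    and T: "finite T" "t \<in> T" "a \<in> T" "b \<in> T"
    and coords: "fst t \<noteq> fst a" "snd t \<noteq> snd a" "fst t \<noteq> fst b" "snd t \<noteq> snd b"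
    and side: "fst t < fst a \<longleftrightarrow> fst t < fst b"
  shows "cw_matches_slope T N t a = cw_matches_slope T N t b"
  using hstep_in_N(1)[OF or bd(1) T(1-3) coords(1,2)] hstep_in_N(1)[OF or bd(2) T(1,2,4) coords(3,4)]
    hstep_eqI[OF side] by simp

(* Rectangles R(t,a), R(t,b) in opposite quadrants of t: if u shares its vertical side with a
   and its horizontal side with b, an edge leaving t and an edge entering t, both among the
   steps towards u, force R(t,a) and R(t,b) to have the same invariant (the exit and the entry
   edge cannot be the same edge, and any other combination links the two orientations). *)
lemma exit_and_entry_force_agreement:
  assumes or: "oriented_subnetwork T N" and bd: "boundary_directed T N t a" "boundary_directed T N t b"
    and T: "finite T" "t \<in> T" "a \<in> T" "b \<in> T"
    and coords: "fst t \<noteq> fst a" "snd t \<noteq> snd a" "fst t \<noteq> fst b" "snd t \<noteq> snd b"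
    and steps: "vstep T t u = vstep T t a" "hstep T t u = hstep T t b"
    and exit: "(t, w1) \<in> N" "w1 = vstep T t u \<or> w1 = hstep T t u"
    and entry: "(w2, t) \<in> N" "w2 = vstep T t u \<or> w2 = hstep T t u"
  shows "cw_matches_slope T N t a = cw_matches_slope T N t b"
  using vstep_in_N[OF or bd(1) T(1-3) coords(1,2)] hstep_in_N[OF or bd(2) T(1,2,4) coords(3,4)]
    exit entry unfolding steps by blast

(* A terminal outside P24 and P13 has other terminals in both diagonal quadrant pairs, so for
   every a there is a terminal u whose diagonal type (Q1/Q3 versus Q2/Q4) differs from a's. *)
lemma inner_terminal_witness:
  assumes gp: "general_position T" and t: "t \<in> T" "t \<notin> P24 T" "t \<notin> P13 T"
  obtains u where "u \<in> T" "u \<noteq> t"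
    "(fst t < fst u \<longleftrightarrow> snd t < snd u) \<longleftrightarrow> \<not> (fst t < fst a \<longleftrightarrow> snd t < snd a)"
proof -
  obtain u24 where u24: "u24 \<in> T" "u24 \<noteq> t" "u24 \<in> Q2 t \<or> u24 \<in> Q4 t"
    using t unfolding P24_def Q2_def Q4_def by auto
  obtain u13 where u13: "u13 \<in> T" "u13 \<noteq> t" "u13 \<in> Q1 t \<or> u13 \<in> Q3 t"
    using t unfolding P13_def Q1_def Q3_def by auto
  have d24: "fst u24 \<noteq> fst t" "snd u24 \<noteq> snd t" using general_positionD[OF gp u24(1) t(1) u24(2)] by auto
  have d13: "fst u13 \<noteq> fst t" "snd u13 \<noteq> snd t" using general_positionD[OF gp u13(1) t(1) u13(2)] by auto
  have s24: "fst t < fst u24 \<longleftrightarrow> snd u24 < snd t" using u24(3) d24 unfolding Q2_def Q4_def by auto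
  have s13: "fst t < fst u13 \<longleftrightarrow> snd t < snd u13" using u13(3) d13 unfolding Q1_def Q3_def by auto
  show ?thesis
  proof (cases "fst t < fst a \<longleftrightarrow> snd t < snd a")
    case True
    then show ?thesis using that[OF u24(1,2)] s24 d24 by linarith
  next
    case False
    then show ?thesis using that[OF u13(1,2)] s13 d13 by linarith
  qed
qed

lemma cw_matches_slope_at_inner_terminal:
  assumes bm: "bidirected_manhattan T N" and gp: "general_position T"
    and T: "t \<in> T" "a \<in> T" "b \<in> T" "t \<noteq> a" "t \<noteq> b"
    and bd: "boundary_directed T N t a" "boundary_directed T N t b"
    and inner: "t \<notin> P24 T" "t \<notin> P13 T"
  shows "cw_matches_slope T N t a = cw_matches_slope T N t b"
proof -
  have or: "oriented_subnetwork T N" using bm unfolding bidirected_manhattan_def by blast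
  have fin: "finite T" using gp unfolding general_position_def by blast
  have ca: "fst t \<noteq> fst a" "snd t \<noteq> snd a" using general_positionD[OF gp T(1,2,4)] by auto
  have cb: "fst t \<noteq> fst b" "snd t \<noteq> snd b" using general_positionD[OF gp T(1,3,5)] by auto
  consider (same_vertical) "snd t < snd a \<longleftrightarrow> snd t < snd b"
    | (same_horizontal) "fst t < fst a \<longleftrightarrow> fst t < fst b"
    | (opposite) "snd t < snd a \<longleftrightarrow> snd b < snd t" "fst t < fst a \<longleftrightarrow> fst b < fst t"
    using ca cb by linarith
  then show ?thesis
  proof cases
    case same_vertical
    then show ?thesis by (rule cw_matches_slope_same_vertical_side[OF or bd fin T(1-3) ca cb])
  next
    case same_horizontal
    then show ?thesis by (rule cw_matches_slope_same_horizontal_side[OF or bd fin T(1-3) ca cb])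
  next
    case opposite
    obtain u where u: "u \<in> T" "u \<noteq> t"
        "(fst t < fst u \<longleftrightarrow> snd t < snd u) \<longleftrightarrow> \<not> (fst t < fst a \<longleftrightarrow> snd t < snd a)"
      using inner_terminal_witness[OF gp T(1) inner] by blast
    obtain w1 where w1: "(t, w1) \<in> N" "w1 = vstep T t u \<or> w1 = hstep T t u"
      using manhattan_exit_step[OF bm fin T(1) u(1)] u(2) by metis
    obtain w2 where w2: "(w2, t) \<in> N" "w2 = vstep T t u \<or> w2 = hstep T t u"
      using manhattan_entry_step[OF bm fin T(1) u(1)] u(2) by metis
    have "snd b < snd t \<longleftrightarrow> \<not> snd t < snd b" "fst b < fst t \<longleftrightarrow> \<not> fst t < fst b"
      using cb by auto
    then have "(snd t < snd u \<longleftrightarrow> snd t < snd a) \<and> (fst t < fst u \<longleftrightarrow> fst t < fst b) \<or>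
               (snd t < snd u \<longleftrightarrow> snd t < snd b) \<and> (fst t < fst u \<longleftrightarrow> fst t < fst a)"
      using opposite u(3) by blast
    then consider "vstep T t u = vstep T t a" "hstep T t u = hstep T t b"
      | "vstep T t u = vstep T t b" "hstep T t u = hstep T t a"
      using vstep_eqI[of t u _ T] hstep_eqI[of t u _ T] by blast
    then show ?thesis
    proof cases
      case 1
      show ?thesis
        by (rule exit_and_entry_force_agreement[OF or bd fin T(1-3) ca cb 1 w1 w2])
    next
      case 2
      show ?thesis
        by (rule exit_and_entry_force_agreement[OF or bd(2,1) fin T(1,3,2) cb ca 2 w1 w2, symmetric])
    qed
  qed
qed

definition y_convex_block :: "pt set \<Rightarrow> pt set \<Rightarrow> bool" where
  "y_convex_block T B \<longleftrightarrow> B \<subseteq> T \<and>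
     (\<forall>m\<in>T. \<forall>s\<in>B. \<forall>e\<in>B. snd s < snd m \<and> snd m < snd e \<longrightarrow>
        m \<in> B \<and> m \<notin> P24 T \<and> m \<notin> P13 T)"

lemma P24_position:
  assumes gp: "general_position T" and p: "p \<in> P24 T" and m: "m \<in> T" "m \<noteq> p"
  shows "(fst p < fst m \<and> snd p < snd m) \<or> (fst m < fst p \<and> snd m < snd p)"
proof -
  have "p \<in> T" "m \<notin> Q2 p" "m \<notin> Q4 p" using p m unfolding P24_def by auto
  moreover have "fst m \<noteq> fst p" "snd m \<noteq> snd p" using general_positionD[OF gp m(1) \<open>p \<in> T\<close> m(2)] by auto
  ultimately show ?thesis unfolding Q2_def Q4_def by auto
qed

lemma P13_position:
  assumes gp: "general_position T" and p: "p \<in> P13 T" and m: "m \<in> T" "m \<noteq> p"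
  shows "(fst p < fst m \<and> snd m < snd p) \<or> (fst m < fst p \<and> snd p < snd m)"
proof -
  have "p \<in> T" "m \<notin> Q1 p" "m \<notin> Q3 p" using p m unfolding P13_def by auto
  moreover have "fst m \<noteq> fst p" "snd m \<noteq> snd p" using general_positionD[OF gp m(1) \<open>p \<in> T\<close> m(2)] by auto
  ultimately show ?thesis unfolding Q1_def Q3_def by auto
qed

lemma P24_P13_exclusive:
  assumes gp: "general_position T" and "p \<in> P24 T" "m \<in> P13 T" "s \<in> T" "s \<noteq> m"
  shows False
proof (cases "m = p")
  case True
  then have "s \<noteq> p" using assms(5) by simp
  then show False using P24_position[OF gp assms(2,4)] P13_position[OF gp assms(3,4,5)] True by auto
next
  case False
  have "m \<in> T" "p \<in> T" using assms(2,3) unfolding P24_def P13_def by auto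
  then show False using P24_position[OF gp assms(2) \<open>m \<in> T\<close> False]
      P13_position[OF gp assms(3) \<open>p \<in> T\<close>] False by auto
qed

lemma y_convex_block_Q3:
  assumes gp: "general_position T" and p: "p \<in> P24 T" and leftmost: "\<forall>r\<in>P24 T. fst p \<le> fst r"
  shows "y_convex_block T (T \<inter> Q3 p)"
  unfolding y_convex_block_def
proof (intro conjI ballI impI)
  fix m s e assume m: "m \<in> T" and s: "s \<in> T \<inter> Q3 p" and e: "e \<in> T \<inter> Q3 p"
    and between: "snd s < snd m \<and> snd m < snd e"
  have pT: "p \<in> T" using p unfolding P24_def by auto
  have "snd m < snd p" using e between unfolding Q3_def by auto
  then have "m \<noteq> p" by auto
  then have mq: "m \<in> Q3 p" using P24_position[OF gp p m] \<open>snd m < snd p\<close> unfolding Q3_def by auto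
  then show "m \<in> T \<inter> Q3 p" using m by blast
  show "m \<notin> P24 T"
    using leftmost mq general_positionD[OF gp m pT] \<open>snd m < snd p\<close> unfolding Q3_def by force
  show "m \<notin> P13 T" using P24_P13_exclusive[OF gp p _ _] s between by blast
qed auto

lemma y_convex_block_Q1:
  assumes gp: "general_position T" and p: "p \<in> P24 T" and rightmost: "\<forall>r\<in>P24 T. fst r \<le> fst p"
  shows "y_convex_block T (T \<inter> Q1 p)"
  unfolding y_convex_block_def
proof (intro conjI ballI impI)
  fix m s e assume m: "m \<in> T" and s: "s \<in> T \<inter> Q1 p" and e: "e \<in> T \<inter> Q1 p"
    and between: "snd s < snd m \<and> snd m < snd e"
  have pT: "p \<in> T" using p unfolding P24_def by auto
  have "snd p < snd m" using s between unfolding Q1_def by auto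
  then have "m \<noteq> p" by auto
  then have mq: "m \<in> Q1 p" using P24_position[OF gp p m] \<open>snd p < snd m\<close> unfolding Q1_def by auto
  then show "m \<in> T \<inter> Q1 p" using m by blast
  show "m \<notin> P24 T"
    using rightmost mq general_positionD[OF gp m pT] \<open>snd p < snd m\<close> unfolding Q1_def by force
  show "m \<notin> P13 T" using P24_P13_exclusive[OF gp p _ _] s between by blast
qed auto

lemma y_convex_block_rect24:
  assumes gp: "general_position T" and pq: "consec (P24 T) p q"
  shows "y_convex_block T (T \<inter> rect p q)"
  unfolding y_convex_block_def
proof (intro conjI ballI impI)
  fix m s e assume m: "m \<in> T" and s: "s \<in> T \<inter> rect p q" and e: "e \<in> T \<inter> rect p q"
    and between: "snd s < snd m \<and> snd m < snd e"
  have p: "p \<in> P24 T" and q: "q \<in> P24 T" and lt: "fst p < fst q"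
    and none: "\<not> (\<exists>r\<in>P24 T. fst p < fst r \<and> fst r < fst q)" using pq unfolding consec_def by auto
  have "q \<in> T" using q unfolding P24_def by auto
  then have "snd p < snd q" using P24_position[OF gp p] lt by force
  then have "snd p < snd m" "snd m < snd q" using s e between unfolding rect_def by auto
  then have "fst p < fst m" "fst m < fst q"
    using P24_position[OF gp p m] P24_position[OF gp q m] by auto
  then show "m \<in> T \<inter> rect p q" "m \<notin> P24 T"
    using m none \<open>snd p < snd m\<close> \<open>snd m < snd q\<close> unfolding rect_def by auto
  show "m \<notin> P13 T" using P24_P13_exclusive[OF gp p _ _] s between by blast
qed auto

lemma y_convex_block_Q2:
  assumes gp: "general_position T" and p: "p \<in> P13 T" and leftmost: "\<forall>r\<in>P13 T. fst p \<le> fst r"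
    and no24: "P24 T = {}"
  shows "y_convex_block T (T \<inter> Q2 p)"
  unfolding y_convex_block_def
proof (intro conjI ballI impI)
  fix m s e assume m: "m \<in> T" and s: "s \<in> T \<inter> Q2 p" and e: "e \<in> T \<inter> Q2 p"
    and between: "snd s < snd m \<and> snd m < snd e"
  have pT: "p \<in> T" using p unfolding P13_def by auto
  have "snd p < snd m" using s between unfolding Q2_def by auto
  then have "m \<noteq> p" by auto
  then have mq: "m \<in> Q2 p" using P13_position[OF gp p m] \<open>snd p < snd m\<close> unfolding Q2_def by auto
  then show "m \<in> T \<inter> Q2 p" using m by blast
  show "m \<notin> P13 T"
    using leftmost mq general_positionD[OF gp m pT] \<open>snd p < snd m\<close> unfolding Q2_def by force
  show "m \<notin> P24 T" using no24 by blast
qed auto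

lemma y_convex_block_Q4:
  assumes gp: "general_position T" and p: "p \<in> P13 T" and rightmost: "\<forall>r\<in>P13 T. fst r \<le> fst p"
    and no24: "P24 T = {}"
  shows "y_convex_block T (T \<inter> Q4 p)"
  unfolding y_convex_block_def
proof (intro conjI ballI impI)
  fix m s e assume m: "m \<in> T" and s: "s \<in> T \<inter> Q4 p" and e: "e \<in> T \<inter> Q4 p"
    and between: "snd s < snd m \<and> snd m < snd e"
  have pT: "p \<in> T" using p unfolding P13_def by auto
  have "snd m < snd p" using e between unfolding Q4_def by auto
  then have "m \<noteq> p" by auto
  then have mq: "m \<in> Q4 p" using P13_position[OF gp p m] \<open>snd m < snd p\<close> unfolding Q4_def by auto
  then show "m \<in> T \<inter> Q4 p" using m by blast
  show "m \<notin> P13 T"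
    using rightmost mq general_positionD[OF gp m pT] \<open>snd m < snd p\<close> unfolding Q4_def by force
  show "m \<notin> P24 T" using no24 by blast
qed auto

lemma y_convex_block_rect13:
  assumes gp: "general_position T" and pq: "consec (P13 T) p q" and no24: "P24 T = {}"
  shows "y_convex_block T (T \<inter> rect p q)"
  unfolding y_convex_block_def
proof (intro conjI ballI impI)
  fix m s e assume m: "m \<in> T" and s: "s \<in> T \<inter> rect p q" and e: "e \<in> T \<inter> rect p q"
    and between: "snd s < snd m \<and> snd m < snd e"
  have p: "p \<in> P13 T" and q: "q \<in> P13 T" and lt: "fst p < fst q"
    and none: "\<not> (\<exists>r\<in>P13 T. fst p < fst r \<and> fst r < fst q)" using pq unfolding consec_def by auto
  have "q \<in> T" using q unfolding P13_def by auto
  then have "snd q < snd p" using P13_position[OF gp p] lt by force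
  then have "snd q < snd m" "snd m < snd p" using s e between unfolding rect_def by auto
  then have "fst p < fst m" "fst m < fst q"
    using P13_position[OF gp p m] P13_position[OF gp q m] by auto
  then show "m \<in> T \<inter> rect p q" "m \<notin> P13 T"
    using m none \<open>snd q < snd m\<close> \<open>snd m < snd p\<close> unfolding rect_def by auto
  show "m \<notin> P24 T" using no24 by blast
qed auto

lemma blocks_y_convex:
  assumes gp: "general_position T" and B: "B \<in> blocks T"
  shows "y_convex_block T B"
proof (cases "P24 T = {}")
  case False
  then show ?thesis using B unfolding blocks_def
    using y_convex_block_Q3[OF gp] y_convex_block_rect24[OF gp] y_convex_block_Q1[OF gp] by auto
next
  case no24: True
  show ?thesis
  proof (cases "P13 T = {}")
    case False
    then show ?thesis using B no24 unfolding blocks_def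
      using y_convex_block_Q2[OF gp _ _ no24] y_convex_block_rect13[OF gp _ no24]
        y_convex_block_Q4[OF gp _ _ no24] by auto
  next
    case True
    then show ?thesis using B no24 unfolding blocks_def y_convex_block_def by auto
  qed
qed

definition y_consecutive :: "pt set \<Rightarrow> pt \<Rightarrow> pt \<Rightarrow> bool" where
  "y_consecutive T p q \<longleftrightarrow> p \<in> T \<and> q \<in> T \<and> snd p < snd q \<and>
     \<not> (\<exists>t\<in>T. snd p < snd t \<and> snd t < snd q)"

lemma y_consecutive_hstrip:
  assumes gp: "general_position T" and pq: "y_consecutive T p q"
  shows "hstrip T p q"
proof -
  have p: "p \<in> T" "q \<in> T" "snd p < snd q" and none: "\<not> (\<exists>t\<in>T. snd p < snd t \<and> snd t < snd q)"
    using pq unfolding y_consecutive_def by auto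
  have "t \<in> {p, q}" if "t \<in> rect p q" "t \<in> T" for t
  proof -
    have "snd t = snd p \<or> snd t = snd q" using that(1) none that(2) p(3) unfolding rect_def by force
    then show ?thesis using general_positionD[OF gp that(2)] p(1,2) by blast
  qed
  then have "empty_rect T p q" using p(1,2) unfolding empty_rect_def rect_def by auto
  then show ?thesis using p none unfolding hstrip_def by (auto simp: min_def max_def)
qed

lemma y_consecutive_unique:
  assumes gp: "general_position T" and "y_consecutive T p q" "y_consecutive T p q'"
  shows "q = q'"
proof -
  have "\<not> snd q < snd q'" "\<not> snd q' < snd q" using assms(2,3) unfolding y_consecutive_def by blast+
  then have "snd q = snd q'" by linarith
  then show ?thesis using general_positionD[OF gp] assms(2,3) unfolding y_consecutive_def by blast
qed

lemma y_successor_in_block: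
  assumes gp: "general_position T" and B: "y_convex_block T B"
    and q: "q \<in> B" and e: "e \<in> B" "snd q < snd e"
  obtains r where "y_consecutive T q r" "r \<in> B" "snd r \<le> snd e"
proof -
  have fin: "finite T" using gp unfolding general_position_def by blast
  have BT: "B \<subseteq> T" using B unfolding y_convex_block_def by blast
  have "snd e \<in> snd ` T" using e(1) BT by blast
  note succ = next_greater[OF finite_imageI[OF fin] this e(2)]
  obtain r where r: "r \<in> T" "snd r = next_greater (snd ` T) (snd q)" using succ(1) by auto
  have consec: "y_consecutive T q r" using r succ q BT unfolding y_consecutive_def by auto
  have le: "snd r \<le> snd e" using succ(3) r(2) e BT by (metis image_eqI not_le subsetD)
  have "r \<in> B"
  proof (cases "snd r = snd e")
    case True
    then show ?thesis using general_positionD[OF gp r(1)] e(1) BT by blast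
  next
    case False
    then show ?thesis using B r(1) q e(1) le succ(2) r(2) unfolding y_convex_block_def by force
  qed
  then show ?thesis using that consec le by blast
qed

lemma cw_matches_slope_sym: "cw_matches_slope T N p q = cw_matches_slope T N q p"
proof -
  have "cw_boundary T p q = cw_boundary T q p"
    unfolding cw_boundary_def Let_def by (simp add: min.commute max.commute)
  moreover have "pos_slope p q = pos_slope q p" unfolding pos_slope_iff by auto
  ultimately show ?thesis unfolding cw_matches_slope_def cw_in_def by simp
qed

lemma boundary_directed_sym: "boundary_directed T N p q \<Longrightarrow> boundary_directed T N q p"
  unfolding boundary_directed_def cw_in_def ccw_in_def ccw_boundary_def cw_boundary_def Let_def
  by (simp add: min.commute max.commute)

lemma compatible_iff_cw_matches_slope:
  assumes "cw_in T N p1 q1 \<noteq> ccw_in T N p1 q1" "cw_in T N p2 q2 \<noteq> ccw_in T N p2 q2"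
  shows "compatible T N p1 q1 p2 q2 \<longleftrightarrow> cw_matches_slope T N p1 q1 = cw_matches_slope T N p2 q2"
  using assms unfolding compatible_def cw_matches_slope_def by blast

locale directed_strip_network =
  fixes T :: "pt set" and N :: "(pt \<times> pt) set"
  assumes general_position: "general_position T"
    and manhattan: "bidirected_manhattan T N"
    and strips_directed: "\<forall>p q. is_strip T p q \<longrightarrow> boundary_directed T N p q"
begin

lemma finite_T: "finite T"
  using general_position unfolding general_position_def by blast

lemma oriented: "oriented_subnetwork T N"
  using manhattan unfolding bidirected_manhattan_def by blast

lemma y_consecutive_directed: "y_consecutive T p q \<Longrightarrow> boundary_directed T N p q"
  using y_consecutive_hstrip[OF general_position] strips_directed unfolding is_strip_def by blast

lemma strip_exactly_one_orientation:
  assumes "is_strip T p q"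
  shows "cw_in T N p q \<noteq> ccw_in T N p q"
proof -
  have pq: "p \<in> T" "q \<in> T" "p \<noteq> q" using assms unfolding is_strip_def vstrip_def hstrip_def by auto
  have "fst p \<noteq> fst q" "snd p \<noteq> snd q" using general_positionD[OF general_position pq] by auto
  then show ?thesis
    using boundary_not_both_orientations[OF oriented finite_T pq(1,2)] strips_directed assms
    unfolding boundary_directed_def by blast
qed

lemma y_consecutive_step:
  assumes "y_consecutive T p q" "y_consecutive T q r" "q \<notin> P24 T" "q \<notin> P13 T"
  shows "cw_matches_slope T N p q = cw_matches_slope T N q r"
proof -
  have T: "q \<in> T" "p \<in> T" "r \<in> T" "q \<noteq> p" "q \<noteq> r"
    using assms(1,2) unfolding y_consecutive_def by auto
  have "boundary_directed T N q p" "boundary_directed T N q r"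
    using y_consecutive_directed[OF assms(1)] y_consecutive_directed[OF assms(2)] boundary_directed_sym
    by blast+
  from cw_matches_slope_at_inner_terminal[OF manhattan general_position T this assms(3,4)]
  show ?thesis using cw_matches_slope_sym by metis
qed

(* All horizontal strips of a y-convex block agree: walk upwards from the lower one through
   successive horizontal strips; every intermediate terminal is inner by y-convexity. *)
lemma y_chain_ordered:
  assumes B: "y_convex_block T B"
  shows "\<lbrakk>y_consecutive T p q; y_consecutive T p' q'; p \<in> B; q \<in> B; q' \<in> B; snd p \<le> snd p'\<rbrakk>
    \<Longrightarrow> cw_matches_slope T N p q = cw_matches_slope T N p' q'"
proof (induction "card {t\<in>T. snd p \<le> snd t \<and> snd t < snd p'}" arbitrary: p q rule: less_induct)
  case less
  have p: "p \<in> T" "snd p < snd q" "\<not> (\<exists>t\<in>T. snd p < snd t \<and> snd t < snd q)"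
    using less.prems(1) unfolding y_consecutive_def by auto
  have p': "p' \<in> T" "snd p' < snd q'" using less.prems(2) unfolding y_consecutive_def by auto
  show ?case
  proof (cases "p = p'")
    case True
    then show ?thesis using y_consecutive_unique[OF general_position less.prems(1)] less.prems(2) by simp
  next
    case False
    then have "snd p \<noteq> snd p'" using general_positionD[OF general_position p(1) p'(1)] by blast
    then have "snd p < snd p'" using less.prems(6) by linarith
    then have "snd q \<le> snd p'" using p(3) p'(1) not_le by blast
    then have "snd q < snd q'" using p'(2) by linarith
    moreover have "q \<in> T" using less.prems(1) unfolding y_consecutive_def by blast
    ultimately have inner: "q \<notin> P24 T" "q \<notin> P13 T"
      using B p(2) less.prems(3,5) unfolding y_convex_block_def by blast+
    obtain r where r: "y_consecutive T q r" "r \<in> B"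
      using y_successor_in_block[OF general_position B less.prems(4,5) \<open>snd q < snd q'\<close>] by blast
    have "{t\<in>T. snd q \<le> snd t \<and> snd t < snd p'} \<subseteq> {t\<in>T. snd p \<le> snd t \<and> snd t < snd p'}"
      using p(2) by auto
    moreover have "p \<notin> {t\<in>T. snd q \<le> snd t \<and> snd t < snd p'}"
      "p \<in> {t\<in>T. snd p \<le> snd t \<and> snd t < snd p'}" using p(1,2) \<open>snd p < snd p'\<close> by auto
    ultimately have "card {t\<in>T. snd q \<le> snd t \<and> snd t < snd p'} < card {t\<in>T. snd p \<le> snd t \<and> snd t < snd p'}"
      using finite_T by (intro psubset_card_mono) auto
    then have "cw_matches_slope T N q r = cw_matches_slope T N p' q'"
      using less.hyps[OF _ r(1) less.prems(2) less.prems(4) r(2) less.prems(5) \<open>snd q \<le> snd p'\<close>]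
      by blast
    then show ?thesis using y_consecutive_step[OF less.prems(1) r(1) inner] by simp
  qed
qed

lemma y_chain:
  assumes "y_convex_block T B" "y_consecutive T p q" "y_consecutive T p' q'"
    "p \<in> B" "q \<in> B" "p' \<in> B" "q' \<in> B"
  shows "cw_matches_slope T N p q = cw_matches_slope T N p' q'"
proof (cases "snd p \<le> snd p'")
  case True
  then show ?thesis using y_chain_ordered[OF assms(1-5,7)] by blast
next
  case False
  then show ?thesis using y_chain_ordered[OF assms(1,3,2,6,7,5)] by simp
qed

(* Every strip of a block agrees with a horizontal strip of the block sharing its lower corner:
   the step from that corner up to its y-successor is the first vertical edge of both. *)
lemma y_consecutive_representative:
  assumes B: "y_convex_block T B" and pq: "is_strip T p q" "p \<in> B" "q \<in> B"
  obtains r s where "y_consecutive T r s" "r \<in> B" "s \<in> B"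
    "cw_matches_slope T N p q = cw_matches_slope T N r s"
proof -
  have upward: "\<exists>s. y_consecutive T a s \<and> s \<in> B \<and> cw_matches_slope T N a b = cw_matches_slope T N a s"
    if ab: "boundary_directed T N a b" "a \<in> B" "b \<in> B" "snd a < snd b" for a b
  proof -
    obtain s where s: "y_consecutive T a s" "s \<in> B"
      using y_successor_in_block[OF general_position B ab(2,3,4)] by blast
    have BT: "B \<subseteq> T" using B unfolding y_convex_block_def by blast
    have "a \<noteq> b" "a \<noteq> s" using ab(4) s(1) unfolding y_consecutive_def by auto
    moreover have T: "a \<in> T" "b \<in> T" "s \<in> T" using ab(2,3) s(2) BT by blast+
    ultimately have coords: "fst a \<noteq> fst b" "snd a \<noteq> snd b" "fst a \<noteq> fst s" "snd a \<noteq> snd s"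
      using general_positionD[OF general_position] by blast+
    have "snd a < snd s" using s(1) unfolding y_consecutive_def by blast
    then have "cw_matches_slope T N a b = cw_matches_slope T N a s"
      using cw_matches_slope_same_vertical_side[OF oriented ab(1) y_consecutive_directed[OF s(1)]
          finite_T T coords] ab(4) by blast
    then show ?thesis using s by blast
  qed
  have pqT: "p \<in> T" "q \<in> T" "p \<noteq> q" using pq(1) unfolding is_strip_def vstrip_def hstrip_def by auto
  have bd: "boundary_directed T N p q" "boundary_directed T N q p"
    using strips_directed pq(1) boundary_directed_sym by blast+
  consider "snd p < snd q" | "snd q < snd p" using general_positionD[OF general_position pqT] by linarith
  then show ?thesis
  proof cases
    case 1
    then show ?thesis using upward[OF bd(1) pq(2,3)] that pq(2) by blast
  next
    case 2
    then show ?thesis using upward[OF bd(2) pq(3,2)] that pq(3) cw_matches_slope_sym by metis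
  qed
qed

end

theorem lemma4p1:
  fixes T :: "pt set" and N :: "(pt \<times> pt) set" and B :: "pt set"
    and p1 q1 p2 q2 :: pt
  assumes "general_position T"
    and "bidirected_manhattan T N"
    and "\<forall>p q. is_strip T p q \<longrightarrow> boundary_directed T N p q"
    and "B \<in> blocks T"
    and "is_strip T p1 q1" and "p1 \<in> B" and "q1 \<in> B"
    and "is_strip T p2 q2" and "p2 \<in> B" and "q2 \<in> B"
  shows "compatible T N p1 q1 p2 q2"
proof -
  interpret directed_strip_network T N using assms(1-3) by unfold_locales
  have B: "y_convex_block T B" using blocks_y_convex[OF assms(1,4)] .
  obtain r1 s1 where r1: "y_consecutive T r1 s1" "r1 \<in> B" "s1 \<in> B"
      "cw_matches_slope T N p1 q1 = cw_matches_slope T N r1 s1"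
    using y_consecutive_representative[OF B assms(5-7)] .
  obtain r2 s2 where r2: "y_consecutive T r2 s2" "r2 \<in> B" "s2 \<in> B"
      "cw_matches_slope T N p2 q2 = cw_matches_slope T N r2 s2"
    using y_consecutive_representative[OF B assms(8-10)] .
  have "cw_matches_slope T N p1 q1 = cw_matches_slope T N p2 q2"
    using y_chain[OF B r1(1) r2(1) r1(2,3) r2(2,3)] r1(4) r2(4) by simp
  then show ?thesis
    using compatible_iff_cw_matches_slope[OF strip_exactly_one_orientation[OF assms(5)]
        strip_exactly_one_orientation[OF assms(8)]] by blast
qed

end
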